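(* Let $(X,d)$ be a complete generalized metric space and let $T,S:X\to X$ be mappings such that $T$ is continuous, one-to-one and subsequentially convergent. Suppose there is $\lambda\in[0,\tfrac12)$ such that \[ d(TSx,TSy)\le \lambda\big[d(Tx,TSx)+d(Ty,TSy)\big] \] for all $x,y\in X$. Then $S$ has a unique fixed point. Moreover, if $T$ is sequentially convergent, then for every $x_0\in X$ the sequence of iterates $\{S^n x_0\}$ converges to this fixed point.
   Context: A generalized metric space (in the sense of Branciari) is a nonempty set $X$ with a map $d:X\times X\to\mathbb{R}$ such that: (i) $d(x,y)\ge 0$ for all $x,y\in X$, and $d(x,y)=0$ iff $x=y$; (ii) $d(x,y)=d(y,x)$ for all $x,y\in X$; (iii) (rectangular property) $d(x,y)\le d(x,w)+d(w,z)+d(z,y)$ for all $x,y\in X$ and all distinct points $w,z\in X\setminus\{x,y\}$. A sequence $\{x_n\}$ in $X$ converges to $x\in X$ if $d(x_n,x)\to 0$; it is Cauchy if $d(x_n,x_m)\to 0$ as $n,m\to\infty$; $(X,d)$ is complete if every Cauchy sequence converges. $T:X\to X$ is continuous if $x_n\to x$ implies $Tx_n\to Tx$. A mapping $T:X\to X$ is called sequentially convergent if for every sequence $\{y_n\}$ in $X$, convergence of $\{Ty_n\}$ implies convergence of $\{y_n\}$; $T$ is called subsequentially convergent if for every sequence $\{y_n\}$ in $X$, convergence of $\{Ty_n\}$ implies that $\{y_n\}$ has a convergent subsequence. *)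

theory Defs
  imports "HOL-Analysis.Analysis"
begin

text \<open>Generalized metric space in the sense of Branciari, on a carrier set X.\<close>
definition gen_metric_space :: "'a set \<Rightarrow> ('a \<Rightarrow> 'a \<Rightarrow> real) \<Rightarrow> bool" where
  "gen_metric_space X d \<longleftrightarrow> X \<noteq> {} \<and>
     (\<forall>x\<in>X. \<forall>y\<in>X. d x y \<ge> 0 \<and> (d x y = 0 \<longleftrightarrow> x = y)) \<and>
     (\<forall>x\<in>X. \<forall>y\<in>X. d x y = d y x) \<and>
     (\<forall>x\<in>X. \<forall>y\<in>X. \<forall>w\<in>X. \<forall>z\<in>X.
        w \<noteq> z \<and> w \<notin> {x, y} \<and> z \<notin> {x, y} \<longrightarrow> d x y \<le> d x w + d w z + d z y)"

definition gm_converges :: "'a set \<Rightarrow> ('a \<Rightarrow> 'a \<Rightarrow> real) \<Rightarrow> (nat \<Rightarrow> 'a) \<Rightarrow> 'a \<Rightarrow> bool" where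
  "gm_converges X d s x \<longleftrightarrow> x \<in> X \<and> (\<lambda>n. d (s n) x) \<longlonglongrightarrow> 0"

definition gm_convergent :: "'a set \<Rightarrow> ('a \<Rightarrow> 'a \<Rightarrow> real) \<Rightarrow> (nat \<Rightarrow> 'a) \<Rightarrow> bool" where
  "gm_convergent X d s \<longleftrightarrow> (\<exists>x. gm_converges X d s x)"

definition gm_Cauchy :: "('a \<Rightarrow> 'a \<Rightarrow> real) \<Rightarrow> (nat \<Rightarrow> 'a) \<Rightarrow> bool" where
  "gm_Cauchy d s \<longleftrightarrow> (\<forall>e>0. \<exists>N. \<forall>m\<ge>N. \<forall>n\<ge>N. d (s m) (s n) < e)"

definition gm_complete :: "'a set \<Rightarrow> ('a \<Rightarrow> 'a \<Rightarrow> real) \<Rightarrow> bool" where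
  "gm_complete X d \<longleftrightarrow> (\<forall>s. range s \<subseteq> X \<and> gm_Cauchy d s \<longrightarrow> gm_convergent X d s)"

definition gm_continuous :: "'a set \<Rightarrow> ('a \<Rightarrow> 'a \<Rightarrow> real) \<Rightarrow> ('a \<Rightarrow> 'a) \<Rightarrow> bool" where
  "gm_continuous X d T \<longleftrightarrow> (\<forall>s x. range s \<subseteq> X \<and> gm_converges X d s x \<longrightarrow>
       gm_converges X d (\<lambda>n. T (s n)) (T x))"

definition seq_convergent_map :: "'a set \<Rightarrow> ('a \<Rightarrow> 'a \<Rightarrow> real) \<Rightarrow> ('a \<Rightarrow> 'a) \<Rightarrow> bool" where
  "seq_convergent_map X d T \<longleftrightarrow> (\<forall>y. range y \<subseteq> X \<and> gm_convergent X d (\<lambda>n. T (y n)) \<longrightarrow>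
       gm_convergent X d y)"

definition subseq_convergent_map :: "'a set \<Rightarrow> ('a \<Rightarrow> 'a \<Rightarrow> real) \<Rightarrow> ('a \<Rightarrow> 'a) \<Rightarrow> bool" where
  "subseq_convergent_map X d T \<longleftrightarrow> (\<forall>y. range y \<subseteq> X \<and> gm_convergent X d (\<lambda>n. T (y n)) \<longrightarrow>
       (\<exists>r. strict_mono r \<and> gm_convergent X d (y \<circ> r)))"

end

theory Submission
  imports Defs
begin

text \<open>Write \<open>t\<^sub>n = T (S\<^sup>n x)\<close> and \<open>a\<^sub>n = d(t\<^sub>n, t\<^sub>n\<^sub>+\<^sub>1)\<close>. The contraction condition
  gives \<open>a\<^sub>n\<^sub>+\<^sub>1 \<le> h a\<^sub>n\<close> with \<open>h = \<lambda>/(1-\<lambda>) < 1\<close> and \<open>d(t\<^sub>m\<^sub>+\<^sub>1, t\<^sub>n\<^sub>+\<^sub>1) \<le> \<lambda>(a\<^sub>m + a\<^sub>n)\<close>, so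
  \<open>(t\<^sub>n)\<close> is Cauchy even without a triangle inequality, and converges by completeness. Since \<open>T\<close>
  is subsequentially convergent, a subsequence of the orbit \<open>S\<^sup>n x\<close> converges to some \<open>v\<close>.
  If the orbit reaches a fixed point it is eventually constant, so \<open>v\<close> is that point. Otherwise the
  \<open>t\<^sub>n\<close> are pairwise distinct (the \<open>a\<^sub>n\<close> decrease strictly), so the rectangular inequality may
  be applied through \<open>t\<^sub>n\<close> and \<open>t\<^sub>n\<^sub>+\<^sub>1\<close>; with continuity of \<open>T\<close> it forces
  \<open>(1-\<lambda>) d(Tv, TSv) \<le> 0\<close>, i.e. \<open>Sv = v\<close>. The same argument shows that every limit of the
  whole orbit is fixed, which gives the convergence statement. Uniqueness is immediate from the
  contraction condition and injectivity of \<open>T\<close>.\<close>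

lemma gen_metric_space_nonneg: "gen_metric_space X d \<Longrightarrow> x \<in> X \<Longrightarrow> y \<in> X \<Longrightarrow> 0 \<le> d x y"
  by (simp add: gen_metric_space_def)

lemma gen_metric_space_eq_0_iff:
  "gen_metric_space X d \<Longrightarrow> x \<in> X \<Longrightarrow> y \<in> X \<Longrightarrow> d x y = 0 \<longleftrightarrow> x = y"
  by (simp add: gen_metric_space_def)

lemma gen_metric_space_pos: "gen_metric_space X d \<Longrightarrow> x \<in> X \<Longrightarrow> y \<in> X \<Longrightarrow> x \<noteq> y \<Longrightarrow> 0 < d x y"
  using gen_metric_space_nonneg gen_metric_space_eq_0_iff by fastforce

lemma gen_metric_space_sym: "gen_metric_space X d \<Longrightarrow> x \<in> X \<Longrightarrow> y \<in> X \<Longrightarrow> d x y = d y x"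
  by (simp add: gen_metric_space_def)

lemma gen_metric_space_rectangle:
  assumes "gen_metric_space X d" "x \<in> X" "y \<in> X" "w \<in> X" "z \<in> X"
    and "w \<noteq> z" "w \<notin> {x, y}" "z \<notin> {x, y}"
  shows "d x y \<le> d x w + d w z + d z y"
  using assms unfolding gen_metric_space_def by blast

lemma gm_converges_eventually_const:
  assumes "gen_metric_space X d" "p \<in> X"
    and "eventually (\<lambda>n. s n = p) sequentially" and "gm_converges X d s v"
  shows "v = p"
proof -
  have "v \<in> X" and lim: "(\<lambda>n. d (s n) v) \<longlonglongrightarrow> 0"
    using assms(4) by (auto simp: gm_converges_def)
  have "(\<lambda>n. d (s n) v) \<longlonglongrightarrow> d p v"
    using assms(3) by (intro tendsto_eventually) (auto elim: eventually_mono)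
  then have "d p v = 0" using lim LIMSEQ_unique by blast
  then show ?thesis using gen_metric_space_eq_0_iff[OF assms(1,2) \<open>v \<in> X\<close>] by simp
qed

lemma seq_convergent_mapD:
  "seq_convergent_map X d T \<Longrightarrow> range y \<subseteq> X \<Longrightarrow> gm_convergent X d (\<lambda>n. T (y n)) \<Longrightarrow> gm_convergent X d y"
  by (simp add: seq_convergent_map_def)

lemma subseq_convergent_mapD:
  "subseq_convergent_map X d T \<Longrightarrow> range y \<subseteq> X \<Longrightarrow> gm_convergent X d (\<lambda>n. T (y n)) \<Longrightarrow>
    \<exists>r. strict_mono r \<and> gm_convergent X d (y \<circ> r)"
  by (simp add: subseq_convergent_map_def)

locale Kannan_T_contraction =
  fixes X :: "'a set" and d :: "'a \<Rightarrow> 'a \<Rightarrow> real" and T S :: "'a \<Rightarrow> 'a" and lam :: real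
  assumes gms: "gen_metric_space X d"
    and T_into: "T ` X \<subseteq> X" and S_into: "S ` X \<subseteq> X"
    and T_inj: "inj_on T X"
    and lam_nonneg: "0 \<le> lam" and lam_less: "lam < 1/2"
    and contr: "\<forall>x\<in>X. \<forall>y\<in>X. d (T (S x)) (T (S y)) \<le> lam * (d (T x) (T (S x)) + d (T y) (T (S y)))"
begin

lemma T_in: "x \<in> X \<Longrightarrow> T x \<in> X"
  using T_into by blast

lemma S_in: "x \<in> X \<Longrightarrow> S x \<in> X"
  using S_into by blast

lemma iterate_in: "x \<in> X \<Longrightarrow> (S ^^ n) x \<in> X"
  by (induction n) (auto intro: S_in)

lemma T_S_dist_le:
  "x \<in> X \<Longrightarrow> y \<in> X \<Longrightarrow> d (T (S x)) (T (S y)) \<le> lam * (d (T x) (T (S x)) + d (T y) (T (S y)))"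
  using contr by blast

lemma T_eq_iff: "x \<in> X \<Longrightarrow> y \<in> X \<Longrightarrow> T x = T y \<longleftrightarrow> x = y"
  using T_inj by (auto dest: inj_onD)

lemma fixed_point_unique:
  assumes "p \<in> X" "S p = p" "q \<in> X" "S q = q"
  shows "p = q"
proof -
  have "d (T p) (T q) \<le> lam * (d (T p) (T p) + d (T q) (T q))"
    using T_S_dist_le[OF assms(1,3)] assms by simp
  also have "\<dots> = 0"
    using gen_metric_space_eq_0_iff[OF gms, of "T p" "T p"] gen_metric_space_eq_0_iff[OF gms, of "T q" "T q"]
      T_in assms by simp
  finally have "d (T p) (T q) = 0"
    using gen_metric_space_nonneg[OF gms] T_in assms by (meson antisym)
  then show ?thesis
    using gen_metric_space_eq_0_iff[OF gms] T_in T_eq_iff assms by simp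
qed

lemma rate_less_1: "lam / (1 - lam) < 1"
  using lam_less by (simp add: field_simps)

lemma rate_nonneg: "0 \<le> lam / (1 - lam)"
  using lam_nonneg lam_less by simp

definition step_dist :: "'a \<Rightarrow> nat \<Rightarrow> real" where
  "step_dist x n = d (T ((S ^^ n) x)) (T ((S ^^ Suc n) x))"

lemma step_dist_nonneg: "x \<in> X \<Longrightarrow> 0 \<le> step_dist x n"
  unfolding step_dist_def by (intro gen_metric_space_nonneg[OF gms] T_in iterate_in) auto

lemma T_iterate_dist_le:
  "x \<in> X \<Longrightarrow> d (T ((S ^^ Suc m) x)) (T ((S ^^ Suc n) x)) \<le> lam * (step_dist x m + step_dist x n)"
  using T_S_dist_le[OF iterate_in iterate_in] by (simp add: step_dist_def)

lemma step_dist_Suc_le: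
  assumes "x \<in> X"
  shows "step_dist x (Suc n) \<le> lam / (1 - lam) * step_dist x n"
proof -
  have "step_dist x (Suc n) \<le> lam * (step_dist x n + step_dist x (Suc n))"
    using T_iterate_dist_le[OF assms, of n "Suc n"] by (simp add: step_dist_def)
  then have "(1 - lam) * step_dist x (Suc n) \<le> lam * step_dist x n"
    by (simp add: algebra_simps)
  then show ?thesis
    using lam_less by (simp add: field_simps)
qed

lemma step_dist_add_le:
  assumes "x \<in> X"
  shows "step_dist x (n + k) \<le> (lam / (1 - lam)) ^ k * step_dist x n"
proof (induction k)
  case (Suc k)
  have "step_dist x (n + Suc k) \<le> lam / (1 - lam) * step_dist x (n + k)"
    using step_dist_Suc_le[OF assms] by simp
  also have "\<dots> \<le> lam / (1 - lam) * ((lam / (1 - lam)) ^ k * step_dist x n)"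
    using Suc lam_nonneg lam_less by (intro mult_left_mono) auto
  finally show ?case by (simp add: mult.assoc)
qed simp

lemma step_dist_tendsto_0:
  assumes "x \<in> X"
  shows "step_dist x \<longlonglongrightarrow> 0"
proof (rule tendsto_sandwich)
  show "\<forall>\<^sub>F n in sequentially. 0 \<le> step_dist x n"
    using step_dist_nonneg[OF assms] by simp
  show "\<forall>\<^sub>F n in sequentially. step_dist x n \<le> (lam / (1 - lam)) ^ n * step_dist x 0"
    using step_dist_add_le[OF assms, of 0] by simp
  show "(\<lambda>n. (lam / (1 - lam)) ^ n * step_dist x 0) \<longlonglongrightarrow> 0"
    using lam_nonneg lam_less rate_less_1 by (intro tendsto_mult_left_zero LIMSEQ_power_zero) simp
qed simp

lemma T_orbit_Cauchy:
  assumes "x \<in> X"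
  shows "gm_Cauchy d (\<lambda>n. T ((S ^^ n) x))"
  unfolding gm_Cauchy_def
proof (intro allI impI)
  fix e :: real
  assume "e > 0"
  have "(\<lambda>n. lam * step_dist x n) \<longlonglongrightarrow> 0"
    using tendsto_mult_right_zero[OF step_dist_tendsto_0[OF assms]] .
  from order_tendstoD(2)[OF this, of "e / 2"] \<open>e > 0\<close>
  obtain N where N: "\<And>n. n \<ge> N \<Longrightarrow> lam * step_dist x n < e / 2"
    by (auto simp: eventually_sequentially)
  have "d (T ((S ^^ m) x)) (T ((S ^^ n) x)) < e" if mn: "m \<ge> Suc N" "n \<ge> Suc N" for m n
  proof -
    obtain m' n' where "m = Suc m'" "n = Suc n'" "m' \<ge> N" "n' \<ge> N"
      using mn by (cases m; cases n) auto
    then show ?thesis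
      using T_iterate_dist_le[OF assms, of m' n'] N[of m'] N[of n'] by (simp add: ring_distribs)
  qed
  then show "\<exists>N. \<forall>m\<ge>N. \<forall>n\<ge>N. d (T ((S ^^ m) x)) (T ((S ^^ n) x)) < e"
    by blast
qed

lemma T_orbit_convergent:
  assumes "gm_complete X d" "x \<in> X"
  shows "gm_convergent X d (\<lambda>n. T ((S ^^ n) x))"
proof -
  have "range (\<lambda>n. T ((S ^^ n) x)) \<subseteq> X"
    using T_in iterate_in assms(2) by blast
  then show ?thesis
    using assms T_orbit_Cauchy unfolding gm_complete_def by blast
qed

lemma step_dist_pos:
  assumes "x \<in> X" "S ((S ^^ n) x) \<noteq> (S ^^ n) x"
  shows "0 < step_dist x n"
proof -
  have "(S ^^ n) x \<in> X" using iterate_in assms(1) .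
  then have "T ((S ^^ n) x) \<noteq> T ((S ^^ Suc n) x)"
    using T_eq_iff S_in assms(2) by simp
  then show ?thesis
    unfolding step_dist_def using gen_metric_space_pos[OF gms] T_in S_in \<open>(S ^^ n) x \<in> X\<close> by simp
qed

lemma T_orbit_inj:
  assumes "x \<in> X" and moving: "\<forall>n. S ((S ^^ n) x) \<noteq> (S ^^ n) x" and "n < m"
  shows "T ((S ^^ n) x) \<noteq> T ((S ^^ m) x)"
proof
  assume "T ((S ^^ n) x) = T ((S ^^ m) x)"
  then have "(S ^^ n) x = (S ^^ m) x"
    using T_eq_iff iterate_in assms(1) by blast
  then have same: "step_dist x m = step_dist x n"
    by (simp add: step_dist_def)
  obtain k where m: "m = n + Suc k"
    using \<open>n < m\<close> less_imp_Suc_add by fastforce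
  have "(lam / (1 - lam)) ^ Suc k < 1"
    using rate_nonneg rate_less_1 power_less_one_iff by blast
  then have "(lam / (1 - lam)) ^ Suc k * step_dist x n < 1 * step_dist x n"
    using step_dist_pos[OF assms(1)] moving by (intro mult_strict_right_mono) auto
  moreover have "step_dist x m \<le> (lam / (1 - lam)) ^ Suc k * step_dist x n"
    unfolding m by (rule step_dist_add_le[OF assms(1)])
  ultimately show False
    using same by linarith
qed

lemma fixed_point_defect_le:
  assumes "x \<in> X" "v \<in> X" "T x \<noteq> T (S x)"
    and "T x \<notin> {T v, T (S v)}" "T (S x) \<notin> {T v, T (S v)}"
  shows "(1 - lam) * d (T v) (T (S v)) \<le> d (T x) (T v) + (1 + lam) * d (T x) (T (S x))"
proof -
  have "d (T v) (T (S v)) \<le> d (T v) (T x) + d (T x) (T (S x)) + d (T (S x)) (T (S v))"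
    using assms by (intro gen_metric_space_rectangle[OF gms] T_in S_in) auto
  moreover have "d (T (S x)) (T (S v)) \<le> lam * (d (T x) (T (S x)) + d (T v) (T (S v)))"
    using T_S_dist_le assms by blast
  moreover have "d (T v) (T x) = d (T x) (T v)"
    using gen_metric_space_sym[OF gms] T_in assms by blast
  ultimately show ?thesis
    by (simp add: algebra_simps)
qed

lemma T_orbit_eventually_avoids:
  assumes "x \<in> X" "\<forall>n. S ((S ^^ n) x) \<noteq> (S ^^ n) x"
  shows "\<exists>N. \<forall>n\<ge>N. T ((S ^^ n) x) \<noteq> c"
proof (cases "\<exists>k. T ((S ^^ k) x) = c")
  case True
  then obtain k where "T ((S ^^ k) x) = c" by blast
  then have "\<forall>n\<ge>Suc k. T ((S ^^ n) x) \<noteq> c"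
    using T_orbit_inj[OF assms] by (metis Suc_le_eq)
  then show ?thesis by blast
qed blast

lemma moving_orbit_defect_le:
  assumes "x \<in> X" and moving: "\<forall>n. S ((S ^^ n) x) \<noteq> (S ^^ n) x" and "v \<in> X"
  shows "\<exists>N. \<forall>k\<ge>N. (1 - lam) * d (T v) (T (S v)) \<le> d (T ((S ^^ k) x)) (T v) + (1 + lam) * step_dist x k"
proof -
  obtain N1 N2 where N1: "\<forall>n\<ge>N1. T ((S ^^ n) x) \<noteq> T v" and N2: "\<forall>n\<ge>N2. T ((S ^^ n) x) \<noteq> T (S v)"
    using T_orbit_eventually_avoids[OF \<open>x \<in> X\<close> moving] by metis
  have "(1 - lam) * d (T v) (T (S v)) \<le> d (T ((S ^^ k) x)) (T v) + (1 + lam) * step_dist x k"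
    if "k \<ge> max N1 N2" for k
  proof -
    have xk: "(S ^^ k) x \<in> X"
      using iterate_in \<open>x \<in> X\<close> .
    have "T ((S ^^ k) x) \<noteq> T (S ((S ^^ k) x))"
      using T_eq_iff[OF xk S_in[OF xk]] moving[rule_format, of k] by auto
    moreover have "T ((S ^^ k) x) \<notin> {T v, T (S v)}"
      using N1 N2 that by auto
    moreover have "T (S ((S ^^ k) x)) \<notin> {T v, T (S v)}"
      using N1[rule_format, of "Suc k"] N2[rule_format, of "Suc k"] that by auto
    ultimately show ?thesis
      unfolding step_dist_def using fixed_point_defect_le[OF xk \<open>v \<in> X\<close>] by simp
  qed
  then show ?thesis by blast
qed

lemma moving_orbit_subseq_limit_fixed:
  assumes cont: "gm_continuous X d T" and "x \<in> X"
    and moving: "\<forall>n. S ((S ^^ n) x) \<noteq> (S ^^ n) x"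
    and "strict_mono r" and lim: "gm_converges X d (\<lambda>n. (S ^^ r n) x) v"
  shows "S v = v"
proof -
  have "v \<in> X" using lim by (simp add: gm_converges_def)
  have "range (\<lambda>n. (S ^^ r n) x) \<subseteq> X"
    using iterate_in \<open>x \<in> X\<close> by blast
  then have "gm_converges X d (\<lambda>n. T ((S ^^ r n) x)) (T v)"
    using cont lim unfolding gm_continuous_def by blast
  then have T_lim: "(\<lambda>n. d (T ((S ^^ r n) x)) (T v)) \<longlonglongrightarrow> 0"
    by (simp add: gm_converges_def)
  have step_lim: "(\<lambda>n. step_dist x (r n)) \<longlonglongrightarrow> 0"
    using LIMSEQ_subseq_LIMSEQ[OF step_dist_tendsto_0[OF \<open>x \<in> X\<close>] \<open>strict_mono r\<close>]
    by (simp add: o_def)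
  obtain N where N: "\<And>k. k \<ge> N \<Longrightarrow>
      (1 - lam) * d (T v) (T (S v)) \<le> d (T ((S ^^ k) x)) (T v) + (1 + lam) * step_dist x k"
    using moving_orbit_defect_le[OF \<open>x \<in> X\<close> moving \<open>v \<in> X\<close>] by blast
  have "\<forall>\<^sub>F n in sequentially. (1 - lam) * d (T v) (T (S v))
          \<le> d (T ((S ^^ r n) x)) (T v) + (1 + lam) * step_dist x (r n)"
  proof (rule eventually_sequentiallyI[of N])
    fix n assume "N \<le> n"
    then show "(1 - lam) * d (T v) (T (S v)) \<le> d (T ((S ^^ r n) x)) (T v) + (1 + lam) * step_dist x (r n)"
      using seq_suble[OF \<open>strict_mono r\<close>, of n] by (intro N) linarith
  qed
  moreover have "(\<lambda>n. d (T ((S ^^ r n) x)) (T v) + (1 + lam) * step_dist x (r n)) \<longlonglongrightarrow> 0"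
    using tendsto_add[OF T_lim tendsto_mult_right_zero[OF step_lim]] by simp
  ultimately have "(1 - lam) * d (T v) (T (S v)) \<le> 0"
    by (intro tendsto_lowerbound) auto
  moreover have "0 \<le> d (T v) (T (S v))"
    using gen_metric_space_nonneg[OF gms T_in T_in] S_in \<open>v \<in> X\<close> by blast
  ultimately have "d (T v) (T (S v)) = 0"
    using lam_less by (simp add: mult_le_0_iff)
  then have "T v = T (S v)"
    using gen_metric_space_eq_0_iff[OF gms T_in T_in] S_in \<open>v \<in> X\<close> by blast
  then show ?thesis
    using T_eq_iff[OF \<open>v \<in> X\<close> S_in] \<open>v \<in> X\<close> by simp
qed

lemma orbit_subseq_limit_fixed:
  assumes "gm_continuous X d T" and "x \<in> X"
    and "strict_mono r" and lim: "gm_converges X d (\<lambda>n. (S ^^ r n) x) v"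
  shows "S v = v"
proof (cases "\<forall>n. S ((S ^^ n) x) \<noteq> (S ^^ n) x")
  case True
  then show ?thesis using moving_orbit_subseq_limit_fixed assms by blast
next
  case False
  then obtain N where fix_N: "S ((S ^^ N) x) = (S ^^ N) x" by blast
  have "(S ^^ (k + N)) x = (S ^^ N) x" for k
    using fix_N by (induction k) auto
  then have "\<forall>n\<ge>N. (S ^^ r n) x = (S ^^ N) x"
    using seq_suble[OF \<open>strict_mono r\<close>] by (metis le_add_diff_inverse2 le_trans)
  then have "v = (S ^^ N) x"
    using gm_converges_eventually_const[OF gms iterate_in[OF \<open>x \<in> X\<close>] _ lim]
    by (auto simp: eventually_sequentially)
  then show ?thesis using fix_N by simp
qed

end

theorem theorem2p4:
  fixes X :: "'a set" and d :: "'a \<Rightarrow> 'a \<Rightarrow> real" and T S :: "'a \<Rightarrow> 'a" and lam :: real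
  assumes gms: "gen_metric_space X d"
    and compl: "gm_complete X d"
    and TX: "T ` X \<subseteq> X" and SX: "S ` X \<subseteq> X"
    and Tcont: "gm_continuous X d T"
    and Tinj: "inj_on T X"
    and Tsub: "subseq_convergent_map X d T"
    and lam_rng: "0 \<le> lam" "lam < 1/2"
    and contr: "\<forall>x\<in>X. \<forall>y\<in>X. d (T (S x)) (T (S y)) \<le> lam * (d (T x) (T (S x)) + d (T y) (T (S y)))"
  shows "(\<exists>!p. p \<in> X \<and> S p = p) \<and>
         (seq_convergent_map X d T \<longrightarrow>
            (\<forall>x0\<in>X. gm_converges X d (\<lambda>n. (S ^^ n) x0) (THE p. p \<in> X \<and> S p = p)))"
proof -
  interpret Kannan_T_contraction X d T S lam
    using gms TX SX Tinj lam_rng contr by unfold_locales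
  obtain x0 where "x0 \<in> X"
    using gms by (auto simp: gen_metric_space_def)
  then have "range (\<lambda>n. (S ^^ n) x0) \<subseteq> X"
    using iterate_in by blast
  then obtain r where "strict_mono r" and "gm_convergent X d ((\<lambda>n. (S ^^ n) x0) \<circ> r)"
    using subseq_convergent_mapD[OF Tsub _ T_orbit_convergent[OF compl \<open>x0 \<in> X\<close>]] by blast
  then obtain v where "gm_converges X d (\<lambda>n. (S ^^ r n) x0) v"
    unfolding gm_convergent_def comp_def by blast
  with \<open>strict_mono r\<close> have "v \<in> X" "S v = v"
    using orbit_subseq_limit_fixed[OF Tcont \<open>x0 \<in> X\<close>] by (auto simp: gm_converges_def)
  then have unique: "\<exists>!p. p \<in> X \<and> S p = p"
    using fixed_point_unique by blast
  have "gm_converges X d (\<lambda>n. (S ^^ n) x) (THE p. p \<in> X \<and> S p = p)"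
    if sc: "seq_convergent_map X d T" and "x \<in> X" for x
  proof -
    have "range (\<lambda>n. (S ^^ n) x) \<subseteq> X"
      using iterate_in \<open>x \<in> X\<close> by blast
    then obtain w where w: "gm_converges X d (\<lambda>n. (S ^^ n) x) w"
      using seq_convergent_mapD[OF sc _ T_orbit_convergent[OF compl \<open>x \<in> X\<close>]]
      unfolding gm_convergent_def by blast
    then have "w \<in> X" "S w = w"
      using orbit_subseq_limit_fixed[OF Tcont \<open>x \<in> X\<close> strict_mono_id] by (auto simp: gm_converges_def)
    with unique w show ?thesis
      by (metis (mono_tags, lifting) the_equality)
  qed
  with unique show ?thesis by blast
qed

end
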